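(* Let $G_p$ be the graph defined in the context. Then $\alpha(G_p)<\alpha_q(G_p)$. (More precisely, $\alpha(G_p)\le 5$ while $\alpha_q(G_p)\ge 6$.)
   Context: All graphs are finite and simple. $\alpha(X)$ denotes the (classical) independence number of $X$. For a finite simple graph $X$ and positive integers $s,d$, a quantum $s$-coclique matrix (in dimension $d$) is a $|V(X)|\times s$ array $P=(P_{vi})_{v\in V(X),\, i\in[s]}$ of orthogonal projections $P_{vi}\in\mathbb{C}^{d\times d}$ such that (a) $\sum_{v\in V(X)}P_{vi}=I_d$ for every $i\in[s]$; (b) $P_{vi}P_{uj}=0$ for all $i\neq j$ in $[s]$ and all adjacent vertices $u\sim v$; (c) $P_{vi}P_{vj}=0$ for all $v\in V(X)$ and all $i\neq j$ in $[s]$. The quantum independence number $\alpha_q(X)$ is the largest $s$ such that a quantum $s$-coclique matrix for $X$ exists for some $d\ge 1$. $G_p$ is the orthogonality graph of the following 24 vectors in $\mathbb{R}^4$ (vertices are the vectors; two are adjacent iff their standard inner product is $0$): $(1,0,0,0),(0,1,0,0),(0,0,1,0),(0,0,0,1)$; $(0,1,1,0),(1,0,0,-1),(1,0,0,1),(0,1,-1,0)$; $(1,1,1,1),(1,-1,1,-1),(1,-1,-1,1),(1,1,-1,-1)$; $(1,-1,0,0),(1,1,0,0),(0,0,1,1),(0,0,1,-1)$; $(-1,1,1,1),(1,1,1,-1),(1,-1,1,1),(1,1,-1,1)$; $(1,0,1,0),(0,1,0,1),(1,0,-1,0),(0,1,0,-1)$. *)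

theory Defs
  imports "Jordan_Normal_Form.Schur_Decomposition"
begin

text \<open>A finite simple graph is given by a finite vertex set V and a symmetric,
irreflexive adjacency relation E (only its restriction to V matters).\<close>

definition independent_set :: "('a \<Rightarrow> 'a \<Rightarrow> bool) \<Rightarrow> 'a set \<Rightarrow> bool" where
  "independent_set E S \<longleftrightarrow> (\<forall>u\<in>S. \<forall>v\<in>S. \<not> E u v)"

definition alpha :: "'a set \<Rightarrow> ('a \<Rightarrow> 'a \<Rightarrow> bool) \<Rightarrow> nat" where
  "alpha V E = Max {card S | S. S \<subseteq> V \<and> independent_set E S}"

definition orth_proj :: "nat \<Rightarrow> complex mat \<Rightarrow> bool" where
  "orth_proj d P \<longleftrightarrow> P \<in> carrier_mat d d \<and> P * P = P \<and> mat_adjoint P = P"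

text \<open>Quantum s-coclique matrix in dimension d; the index set [s] is {0..<s}.
Condition (a), sum over V of P v i = I_d, is stated entrywise.\<close>
definition quantum_coclique ::
  "'a set \<Rightarrow> ('a \<Rightarrow> 'a \<Rightarrow> bool) \<Rightarrow> nat \<Rightarrow> nat \<Rightarrow> ('a \<Rightarrow> nat \<Rightarrow> complex mat) \<Rightarrow> bool" where
  "quantum_coclique V E s d P \<longleftrightarrow>
     (\<forall>v\<in>V. \<forall>i<s. orth_proj d (P v i)) \<and>
     (\<forall>i<s. \<forall>a<d. \<forall>b<d. (\<Sum>v\<in>V. P v i $$ (a, b)) = (1\<^sub>m d :: complex mat) $$ (a, b)) \<and>
     (\<forall>i<s. \<forall>j<s. i \<noteq> j \<longrightarrow> (\<forall>u\<in>V. \<forall>v\<in>V. E u v \<longrightarrow> P v i * P u j = 0\<^sub>m d d)) \<and>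
     (\<forall>v\<in>V. \<forall>i<s. \<forall>j<s. i \<noteq> j \<longrightarrow> P v i * P v j = 0\<^sub>m d d)"

definition alpha_q :: "'a set \<Rightarrow> ('a \<Rightarrow> 'a \<Rightarrow> bool) \<Rightarrow> nat" where
  "alpha_q V E = (GREATEST s. \<exists>d\<ge>1. \<exists>P. quantum_coclique V E s d P)"

definition Gp_vertices :: "int list set" where
  "Gp_vertices = {[1,0,0,0],[0,1,0,0],[0,0,1,0],[0,0,0,1],
                  [0,1,1,0],[1,0,0,-1],[1,0,0,1],[0,1,-1,0],
                  [1,1,1,1],[1,-1,1,-1],[1,-1,-1,1],[1,1,-1,-1],
                  [1,-1,0,0],[1,1,0,0],[0,0,1,1],[0,0,1,-1],
                  [-1,1,1,1],[1,1,1,-1],[1,-1,1,1],[1,1,-1,1],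
                  [1,0,1,0],[0,1,0,1],[1,0,-1,0],[0,1,0,-1]}"

definition Gp_adj :: "int list \<Rightarrow> int list \<Rightarrow> bool" where
  "Gp_adj u v \<longleftrightarrow> (\<Sum>k<4. u ! k * v ! k) = 0"

end

theory Submission
  imports Defs
begin

text \<open>The 24 vectors fall into six pairwise disjoint orthogonal bases of R^4. Putting the
rank-one projections onto the i-th basis in column i of the array (and zero elsewhere) gives a
quantum 6-coclique in dimension 4: each column resolves the identity, and two projections in
different columns are orthogonal whenever their vectors are. Classically, each basis is a clique,
so an independent set of size 6 would pick exactly one vector from every basis, and a finite check
shows that every such transversal contains two orthogonal vectors.\<close>

definition clique :: "('a \<Rightarrow> 'a \<Rightarrow> bool) \<Rightarrow> 'a set \<Rightarrow> bool" where
  "clique E C \<longleftrightarrow> (\<forall>u\<in>C. \<forall>v\<in>C. u \<noteq> v \<longrightarrow> E u v)"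

lemma card_independent_inter_clique_le_1:
  assumes "independent_set E S" and "clique E C"
  shows "card (S \<inter> C) \<le> 1"
proof (cases "finite (S \<inter> C)")
  case True
  have "\<forall>u\<in>S \<inter> C. \<forall>v\<in>S \<inter> C. u = v"
    using assms unfolding independent_set_def clique_def by blast
  then show ?thesis using True card_le_Suc0_iff_eq by (metis One_nat_def)
qed simp

lemma independent_meets_every_clique:
  assumes "finite I" and cover: "V \<subseteq> (\<Union>j\<in>I. C j)" and cliques: "\<And>j. j \<in> I \<Longrightarrow> clique E (C j)"
    and "S \<subseteq> V" and indep: "independent_set E S" and large: "card I \<le> card S" and "i \<in> I"
  shows "S \<inter> C i \<noteq> {}"
proof
  assume miss: "S \<inter> C i = {}"
  have "S = (\<Union>j\<in>I - {i}. S \<inter> C j)"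
  proof (intro equalityI subsetI)
    fix x assume "x \<in> S"
    then obtain j where "j \<in> I" and "x \<in> C j"
      using cover \<open>S \<subseteq> V\<close> by blast
    moreover have "j \<noteq> i"
      using miss \<open>x \<in> S\<close> \<open>x \<in> C j\<close> by blast
    ultimately show "x \<in> (\<Union>j\<in>I - {i}. S \<inter> C j)"
      using \<open>x \<in> S\<close> by blast
  qed blast
  then have "card S \<le> (\<Sum>j\<in>I - {i}. card (S \<inter> C j))"
    using \<open>finite I\<close> card_UN_le[of "I - {i}" "\<lambda>j. S \<inter> C j"] by simp
  also have "\<dots> \<le> (\<Sum>j\<in>I - {i}. 1)"
    using card_independent_inter_clique_le_1[OF indep] cliques by (intro sum_mono) auto
  also have "\<dots> < card I"
    using \<open>finite I\<close> \<open>i \<in> I\<close> card_Diff1_less[of I i] by simp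
  finally show False
    using large by simp
qed

lemma alpha_le:
  assumes "finite V" and "\<And>S. S \<subseteq> V \<Longrightarrow> independent_set E S \<Longrightarrow> card S \<le> k"
  shows "alpha V E \<le> k"
  unfolding alpha_def
proof (rule Max.boundedI)
  have "{card S |S. S \<subseteq> V \<and> independent_set E S} \<subseteq> card ` Pow V" by auto
  then show "finite {card S |S. S \<subseteq> V \<and> independent_set E S}"
    using assms(1) finite_subset by blast
  show "{card S |S. S \<subseteq> V \<and> independent_set E S} \<noteq> {}"
    by (auto simp: independent_set_def)
  show "\<And>a. a \<in> {card S |S. S \<subseteq> V \<and> independent_set E S} \<Longrightarrow> a \<le> k"
    using assms(2) by blast
qed

lemma index_mult_mat_sum:
  "A \<in> carrier_mat d d \<Longrightarrow> B \<in> carrier_mat d d \<Longrightarrow> a < d \<Longrightarrow> b < d \<Longrightarrow>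
   (A * B) $$ (a, b) = (\<Sum>c<d. A $$ (a, c) * B $$ (c, b))"
  by (simp add: scalar_prod_def atLeast0LessThan)

lemma index_mat_adjoint:
  "A \<in> carrier_mat d d \<Longrightarrow> a < d \<Longrightarrow> b < d \<Longrightarrow> mat_adjoint A $$ (a, b) = cnj (A $$ (b, a))"
  by (simp add: mat_adjoint_def mat_of_rows_def)

lemma orth_proj_zero: "orth_proj d (0\<^sub>m d d)"
proof -
  have "mat_adjoint (0\<^sub>m d d) = (0\<^sub>m d d :: complex mat)"
  proof (rule eq_matI)
    fix a b assume "a < dim_row (0\<^sub>m d d :: complex mat)" "b < dim_col (0\<^sub>m d d :: complex mat)"
    then show "mat_adjoint (0\<^sub>m d d) $$ (a, b) = (0\<^sub>m d d :: complex mat) $$ (a, b)"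
      by (simp add: index_mat_adjoint[of _ d])
  qed (simp_all add: mat_adjoint_def)
  then show ?thesis
    unfolding orth_proj_def by simp
qed

lemma le_1_of_square_le_self:
  fixes x :: real
  assumes "x\<^sup>2 \<le> x"
  shows "x \<le> 1"
proof (rule ccontr)
  assume "\<not> x \<le> 1"
  then have "x * 1 < x * x" by (intro mult_strict_left_mono) auto
  then show False using assms by (simp add: power2_eq_square)
qed

text \<open>For P = P^2 = P^* the diagonal entry P(a,a) is the sum of the |P(a,c)|^2, hence at least
|P(a,a)|^2.\<close>
lemma orth_proj_diag_le_1:
  assumes P: "orth_proj d P" and a: "a < d"
  shows "Re (P $$ (a, a)) \<le> 1"
proof -
  have car: "P \<in> carrier_mat d d" and idem: "P * P = P" and herm: "mat_adjoint P = P"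
    using P unfolding orth_proj_def by auto
  have "P $$ (a, a) = (\<Sum>c<d. P $$ (a, c) * P $$ (c, a))"
    using index_mult_mat_sum[OF car car a a] idem by simp
  also have "\<dots> = (\<Sum>c<d. complex_of_real ((cmod (P $$ (a, c)))\<^sup>2))"
  proof (rule sum.cong[OF refl])
    fix c assume "c \<in> {..<d}"
    then have "P $$ (c, a) = cnj (P $$ (a, c))"
      using index_mat_adjoint[OF car, of c a] herm a by simp
    then show "P $$ (a, c) * P $$ (c, a) = complex_of_real ((cmod (P $$ (a, c)))\<^sup>2)"
      using complex_norm_square[of "P $$ (a, c)"] by metis
  qed
  finally have diag: "Re (P $$ (a, a)) = (\<Sum>c<d. (cmod (P $$ (a, c)))\<^sup>2)"
    by simp
  have "(Re (P $$ (a, a)))\<^sup>2 \<le> (cmod (P $$ (a, a)))\<^sup>2"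
    by (simp add: cmod_power2)
  also have "\<dots> \<le> Re (P $$ (a, a))"
    unfolding diag by (rule member_le_sum) (use a in auto)
  finally show ?thesis
    by (rule le_1_of_square_le_self)
qed

lemma orth_proj_sum:
  fixes P :: "'i \<Rightarrow> complex mat"
  assumes "finite I"
    and proj: "\<And>i. i \<in> I \<Longrightarrow> orth_proj d (P i)"
    and orth: "\<And>i j. i \<in> I \<Longrightarrow> j \<in> I \<Longrightarrow> i \<noteq> j \<Longrightarrow> P i * P j = 0\<^sub>m d d"
  shows "orth_proj d (mat d d (\<lambda>(a, b). \<Sum>i\<in>I. P i $$ (a, b)))"
    (is "orth_proj d ?Q")
proof -
  have car: "\<And>i. i \<in> I \<Longrightarrow> P i \<in> carrier_mat d d"
    using proj unfolding orth_proj_def by blast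
  have row_sum: "(\<Sum>j\<in>I. (P i * P j) $$ (a, b)) = P i $$ (a, b)"
    if i: "i \<in> I" and ab: "a < d" "b < d" for i a b
  proof -
    have "(\<Sum>j\<in>I. (P i * P j) $$ (a, b)) = (\<Sum>j\<in>I. if i = j then (P i * P i) $$ (a, b) else 0)"
      using orth[OF i] ab by (intro sum.cong) auto
    also have "\<dots> = (P i * P i) $$ (a, b)"
      using \<open>finite I\<close> i by simp
    also have "\<dots> = P i $$ (a, b)"
      using proj[OF i] unfolding orth_proj_def by simp
    finally show ?thesis .
  qed
  have "?Q * ?Q = ?Q"
  proof (rule eq_matI)
    fix a b assume "a < dim_row ?Q" "b < dim_col ?Q"
    then have a: "a < d" and b: "b < d" by auto
    have "(?Q * ?Q) $$ (a, b) = (\<Sum>c<d. (\<Sum>i\<in>I. P i $$ (a, c)) * (\<Sum>j\<in>I. P j $$ (c, b)))"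
      using index_mult_mat_sum[of ?Q d ?Q a b] a b by simp
    also have "\<dots> = (\<Sum>c<d. \<Sum>i\<in>I. \<Sum>j\<in>I. P i $$ (a, c) * P j $$ (c, b))"
      by (simp only: sum_product)
    also have "\<dots> = (\<Sum>i\<in>I. \<Sum>j\<in>I. \<Sum>c<d. P i $$ (a, c) * P j $$ (c, b))"
      by (subst sum.swap) (rule sum.cong[OF refl], rule sum.swap)
    also have "\<dots> = (\<Sum>i\<in>I. \<Sum>j\<in>I. (P i * P j) $$ (a, b))"
      using a b car by (simp add: index_mult_mat_sum[of _ d])
    also have "\<dots> = ?Q $$ (a, b)"
      using a b row_sum by simp
    finally show "(?Q * ?Q) $$ (a, b) = ?Q $$ (a, b)" .
  qed auto
  moreover have "mat_adjoint ?Q = ?Q"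
  proof (rule eq_matI)
    fix a b assume "a < dim_row ?Q" "b < dim_col ?Q"
    then have a: "a < d" and b: "b < d" by auto
    have "cnj (P i $$ (b, a)) = P i $$ (a, b)" if "i \<in> I" for i
      using proj[OF that] index_mat_adjoint[OF car[OF that] a b] unfolding orth_proj_def by simp
    then show "mat_adjoint ?Q $$ (a, b) = ?Q $$ (a, b)"
      using a b by (simp add: index_mat_adjoint[of _ d] cnj_sum)
  qed (simp_all add: mat_adjoint_def)
  ultimately show ?thesis
    unfolding orth_proj_def by simp
qed

text \<open>Summing the traces of the columns of P over i gives s d. Regrouping by vertices,
the trace of each row sum, itself an orthogonal projection, is at most d.\<close>
lemma quantum_coclique_le_card:
  assumes "finite V" and "d \<ge> 1" and "quantum_coclique V E s d P"
  shows "s \<le> card V"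
proof -
  have proj: "\<And>v i. v \<in> V \<Longrightarrow> i < s \<Longrightarrow> orth_proj d (P v i)"
    and resolution: "\<And>i a. i < s \<Longrightarrow> a < d \<Longrightarrow> (\<Sum>v\<in>V. P v i $$ (a, a)) = 1"
    and orth: "\<And>v i j. v \<in> V \<Longrightarrow> i < s \<Longrightarrow> j < s \<Longrightarrow> i \<noteq> j \<Longrightarrow> P v i * P v j = 0\<^sub>m d d"
    using assms(3) unfolding quantum_coclique_def by auto
  define Q where "Q v = mat d d (\<lambda>(a, b). \<Sum>i<s. P v i $$ (a, b))" for v
  have Q_diag: "Re (Q v $$ (a, a)) \<le> 1" if "v \<in> V" and "a < d" for v a
    unfolding Q_def using that proj orth
    by (intro orth_proj_diag_le_1[OF orth_proj_sum]) auto
  have "real s * real d = (\<Sum>i<s. \<Sum>a<d. Re (\<Sum>v\<in>V. P v i $$ (a, a)))"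
    using resolution by simp
  also have "\<dots> = (\<Sum>v\<in>V. \<Sum>a<d. Re (Q v $$ (a, a)))"
    by (simp add: Q_def Re_sum sum.swap[of _ "{..<d}" V] sum.swap[of _ "{..<s}" V]
        sum.swap[of _ "{..<s}" "{..<d}"])
  also have "\<dots> \<le> (\<Sum>v\<in>V. \<Sum>a<d. 1)"
    using Q_diag by (intro sum_mono) auto
  also have "\<dots> = real (card V) * real d"
    by simp
  finally show ?thesis
    using assms(2) by simp
qed

lemma alpha_q_ge:
  assumes "finite V" and "d \<ge> 1" and "quantum_coclique V E s d P"
  shows "s \<le> alpha_q V E"
  unfolding alpha_q_def
proof (rule Greatest_le_nat[where b = "card V"])
  show "\<exists>d\<ge>1. \<exists>P. quantum_coclique V E s d P"
    using assms(2,3) by blast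
  show "\<And>t. \<exists>d\<ge>1. \<exists>P. quantum_coclique V E t d P \<Longrightarrow> t \<le> card V"
    using quantum_coclique_le_card[OF assms(1)] by blast
qed

definition dot :: "nat \<Rightarrow> int list \<Rightarrow> int list \<Rightarrow> int" where
  "dot n u v = (\<Sum>k<n. u ! k * v ! k)"

definition rank_one_proj :: "nat \<Rightarrow> int list \<Rightarrow> complex mat" where
  "rank_one_proj n v = mat n n (\<lambda>(a, b). of_int (v ! a * v ! b) / of_int (dot n v v))"

lemma dot_commute: "dot n u v = dot n v u"
  unfolding dot_def by (simp add: mult.commute)

lemma rank_one_proj_carrier: "rank_one_proj n v \<in> carrier_mat n n"
  by (simp add: rank_one_proj_def)

lemma rank_one_proj_mult:
  "rank_one_proj n v * rank_one_proj n u =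
   mat n n (\<lambda>(a, b). of_int (v ! a * u ! b * dot n v u) / of_int (dot n v v * dot n u u))"
  (is "_ = ?R")
proof (rule eq_matI)
  fix a b assume "a < dim_row ?R" and "b < dim_col ?R"
  then have a: "a < n" and b: "b < n" by auto
  have "(rank_one_proj n v * rank_one_proj n u) $$ (a, b)
      = (\<Sum>c<n. of_int (v ! a * v ! c) / of_int (dot n v v) *
                   (of_int (u ! c * u ! b) / of_int (dot n u u)))"
    using index_mult_mat_sum[OF rank_one_proj_carrier rank_one_proj_carrier a b] a b
    by (simp add: rank_one_proj_def)
  also have "\<dots> = (\<Sum>c<n. of_int (v ! a * u ! b) * of_int (v ! c * u ! c) /
                          of_int (dot n v v * dot n u u))"
    by (rule sum.cong) (simp_all add: field_simps)
  also have "\<dots> = of_int (v ! a * u ! b * dot n v u) / of_int (dot n v v * dot n u u)"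
    by (simp add: dot_def sum_divide_distrib[symmetric] sum_distrib_left[symmetric])
  finally show "(rank_one_proj n v * rank_one_proj n u) $$ (a, b) = ?R $$ (a, b)"
    using a b by simp
qed (auto simp: rank_one_proj_def)

lemma rank_one_proj_mult_orthogonal:
  "dot n v u = 0 \<Longrightarrow> rank_one_proj n v * rank_one_proj n u = 0\<^sub>m n n"
  unfolding rank_one_proj_mult by (rule eq_matI) auto

lemma orth_proj_rank_one_proj:
  assumes "dot n v v \<noteq> 0"
  shows "orth_proj n (rank_one_proj n v)"
proof -
  have "rank_one_proj n v * rank_one_proj n v = rank_one_proj n v"
    unfolding rank_one_proj_mult by (rule eq_matI) (auto simp: rank_one_proj_def assms)
  moreover have "mat_adjoint (rank_one_proj n v) = rank_one_proj n v"
  proof (rule eq_matI)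
    fix a b assume "a < dim_row (rank_one_proj n v)" "b < dim_col (rank_one_proj n v)"
    then have a: "a < n" and b: "b < n" by (auto simp: rank_one_proj_def)
    show "mat_adjoint (rank_one_proj n v) $$ (a, b) = rank_one_proj n v $$ (a, b)"
      using index_mat_adjoint[OF rank_one_proj_carrier a b] a b
      by (simp add: rank_one_proj_def mult.commute)
  qed (simp_all add: mat_adjoint_def rank_one_proj_def)
  ultimately show ?thesis
    unfolding orth_proj_def by (simp add: rank_one_proj_carrier)
qed

text \<open>Hypothesis resolution says that B i is an orthogonal basis: the rank-one projections onto
its vectors sum to the identity.\<close>
lemma quantum_coclique_of_orthogonal_bases:
  assumes "finite V"
    and subset: "\<And>i. i < s \<Longrightarrow> B i \<subseteq> V"
    and disjoint: "\<And>i j. i < s \<Longrightarrow> j < s \<Longrightarrow> i \<noteq> j \<Longrightarrow> B i \<inter> B j = {}"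
    and nonzero: "\<And>i v. i < s \<Longrightarrow> v \<in> B i \<Longrightarrow> dot n v v \<noteq> 0"
    and resolution: "\<And>i a b. i < s \<Longrightarrow> a < n \<Longrightarrow> b < n \<Longrightarrow>
      (\<Sum>v\<in>B i. rank_one_proj n v $$ (a, b)) = (1\<^sub>m n :: complex mat) $$ (a, b)"
    and adjacent_orthogonal: "\<And>u v. E u v \<Longrightarrow> dot n u v = 0"
  shows "quantum_coclique V E s n (\<lambda>v i. if i < s \<and> v \<in> B i then rank_one_proj n v else 0\<^sub>m n n)"
    (is "quantum_coclique V E s n ?P")
  unfolding quantum_coclique_def
proof (intro conjI ballI allI impI)
  fix v i show "orth_proj n (?P v i)"
    using nonzero by (auto intro: orth_proj_rank_one_proj orth_proj_zero)
next
  fix i a b assume i: "i < s" and a: "a < n" and b: "b < n"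
  have "(\<Sum>v\<in>V. ?P v i $$ (a, b)) = (\<Sum>v\<in>B i. rank_one_proj n v $$ (a, b))"
    using \<open>finite V\<close> subset[OF i] i a b
    by (intro sum.mono_neutral_cong_right) auto
  then show "(\<Sum>v\<in>V. ?P v i $$ (a, b)) = (1\<^sub>m n :: complex mat) $$ (a, b)"
    using resolution[OF i a b] by simp
next
  fix i j u v assume "i < s" "j < s" "i \<noteq> j" "E u v"
  then show "?P v i * ?P u j = 0\<^sub>m n n"
    using adjacent_orthogonal[of u v]
    by (auto simp: dot_commute rank_one_proj_mult_orthogonal
        left_mult_zero_mat[OF rank_one_proj_carrier] right_mult_zero_mat[OF rank_one_proj_carrier])
next
  fix v i j assume "i < s" "j < s" "i \<noteq> j"
  then show "?P v i * ?P v j = 0\<^sub>m n n"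
    using disjoint[of i j]
    by (auto simp: left_mult_zero_mat[OF rank_one_proj_carrier] right_mult_zero_mat[OF rank_one_proj_carrier])
qed

definition Gp_basis :: "nat \<Rightarrow> int list set" where
  "Gp_basis i =
     [{[1,0,0,0],[0,1,0,0],[0,0,1,0],[0,0,0,1]},
      {[0,1,1,0],[1,0,0,-1],[1,0,0,1],[0,1,-1,0]},
      {[1,1,1,1],[1,-1,1,-1],[1,-1,-1,1],[1,1,-1,-1]},
      {[1,-1,0,0],[1,1,0,0],[0,0,1,1],[0,0,1,-1]},
      {[-1,1,1,1],[1,1,1,-1],[1,-1,1,1],[1,1,-1,1]},
      {[1,0,1,0],[0,1,0,1],[1,0,-1,0],[0,1,0,-1]}] ! i"

lemma less_6_cases:
  assumes "(i::nat) < 6"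
  obtains "i = 0" | "i = 1" | "i = 2" | "i = 3" | "i = 4" | "i = 5"
proof -
  have "i = 0 \<or> i = 1 \<or> i = 2 \<or> i = 3 \<or> i = 4 \<or> i = 5"
    using assms by arith
  then show thesis
    using that by blast
qed

lemma lessThan_6: "{..<6::nat} = {0, 1, 2, 3, 4, 5}"
  by (auto elim: less_6_cases)

lemma Gp_adj_iff_dot: "Gp_adj u v \<longleftrightarrow> dot 4 u v = 0"
  by (simp add: Gp_adj_def dot_def)

lemma Gp_vertices_eq_Union_bases: "Gp_vertices = (\<Union>i<6. Gp_basis i)"
  unfolding lessThan_6 Gp_vertices_def by (auto simp: Gp_basis_def numeral_eq_Suc)

lemma Gp_bases_disjoint: "i < 6 \<Longrightarrow> j < 6 \<Longrightarrow> i \<noteq> j \<Longrightarrow> Gp_basis i \<inter> Gp_basis j = {}"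
  by (elim less_6_cases) (simp_all add: Gp_basis_def numeral_eq_Suc)

lemma Gp_basis_clique: "i < 6 \<Longrightarrow> clique Gp_adj (Gp_basis i)"
  by (elim less_6_cases)
    (simp_all add: clique_def Gp_adj_def Gp_basis_def numeral_eq_Suc lessThan_Suc)

lemma Gp_basis_nonzero: "i < 6 \<Longrightarrow> v \<in> Gp_basis i \<Longrightarrow> dot 4 v v \<noteq> 0"
  by (elim less_6_cases) (auto simp: dot_def Gp_basis_def numeral_eq_Suc lessThan_Suc)

lemma Gp_basis_resolution:
  "i < 6 \<Longrightarrow> a < 4 \<Longrightarrow> b < 4 \<Longrightarrow>
   (\<Sum>v\<in>Gp_basis i. rank_one_proj 4 v $$ (a, b)) = (1\<^sub>m 4 :: complex mat) $$ (a, b)"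
  by (elim less_6_cases)
    (auto simp: rank_one_proj_def dot_def Gp_basis_def numeral_eq_Suc lessThan_Suc less_Suc_eq)


lemma Gp_no_independent_transversal:
  assumes "\<And>i. i < 6 \<Longrightarrow> x i \<in> Gp_basis i"
  shows "\<exists>i<6. \<exists>j<6. Gp_adj (x i) (x j)"
proof (rule ccontr)
  assume "\<not> ?thesis"
  then have nonadjacent: "\<not> Gp_adj (x i) (x j)" if "i < 6" "j < 6" for i j
    using that by blast
  have transversals_adjacent:
    \<comment> \<open>nested so that simp discards a partial transversal as soon as it contains an edge\<close>
    "\<forall>x0\<in>Gp_basis 0. \<forall>x1\<in>Gp_basis 1. Gp_adj x0 x1 \<or>
     (\<forall>x2\<in>Gp_basis 2. Gp_adj x0 x2 \<or> Gp_adj x1 x2 \<or>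
     (\<forall>x3\<in>Gp_basis 3. Gp_adj x0 x3 \<or> Gp_adj x1 x3 \<or> Gp_adj x2 x3 \<or>
     (\<forall>x4\<in>Gp_basis 4. Gp_adj x0 x4 \<or> Gp_adj x1 x4 \<or> Gp_adj x2 x4 \<or> Gp_adj x3 x4 \<or>
     (\<forall>x5\<in>Gp_basis 5. Gp_adj x0 x5 \<or> Gp_adj x1 x5 \<or> Gp_adj x2 x5 \<or> Gp_adj x3 x5 \<or>
        Gp_adj x4 x5))))"
    by (simp add: Gp_adj_def Gp_basis_def numeral_eq_Suc lessThan_Suc)
  moreover have "x 0 \<in> Gp_basis 0" "x 1 \<in> Gp_basis 1" "x 2 \<in> Gp_basis 2"
    "x 3 \<in> Gp_basis 3" "x 4 \<in> Gp_basis 4" "x 5 \<in> Gp_basis 5"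
    using assms by simp_all
  moreover have "\<not> Gp_adj (x 0) (x 1)" "\<not> Gp_adj (x 0) (x 2)" "\<not> Gp_adj (x 0) (x 3)"
    "\<not> Gp_adj (x 0) (x 4)" "\<not> Gp_adj (x 0) (x 5)" "\<not> Gp_adj (x 1) (x 2)"
    "\<not> Gp_adj (x 1) (x 3)" "\<not> Gp_adj (x 1) (x 4)" "\<not> Gp_adj (x 1) (x 5)"
    "\<not> Gp_adj (x 2) (x 3)" "\<not> Gp_adj (x 2) (x 4)" "\<not> Gp_adj (x 2) (x 5)"
    "\<not> Gp_adj (x 3) (x 4)" "\<not> Gp_adj (x 3) (x 5)" "\<not> Gp_adj (x 4) (x 5)"
    using nonadjacent by simp_all
  ultimately show False
    by blast
qed

lemma Gp_independent_card_le_5: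
  assumes "S \<subseteq> Gp_vertices" and indep: "independent_set Gp_adj S"
  shows "card S \<le> 5"
proof (rule ccontr)
  assume "\<not> card S \<le> 5"
  then have "card {..<6::nat} \<le> card S"
    by simp
  then have "\<forall>i. \<exists>y. i < 6 \<longrightarrow> y \<in> S \<inter> Gp_basis i"
    using independent_meets_every_clique[of "{..<6}" Gp_vertices Gp_basis Gp_adj S]
      Gp_vertices_eq_Union_bases Gp_basis_clique assms by blast
  then obtain x where x: "\<And>i. i < 6 \<Longrightarrow> x i \<in> S \<inter> Gp_basis i"
    by metis
  then obtain i j where "i < 6" "j < 6" "Gp_adj (x i) (x j)"
    using Gp_no_independent_transversal[of x] by blast
  then show False
    using x indep unfolding independent_set_def by blast
qed

lemma alpha_Gp_le_5: "alpha Gp_vertices Gp_adj \<le> 5"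
  by (rule alpha_le) (simp_all add: Gp_vertices_def Gp_independent_card_le_5)

lemma alpha_q_Gp_ge_6: "6 \<le> alpha_q Gp_vertices Gp_adj"
proof (rule alpha_q_ge)
  show "finite Gp_vertices"
    by (simp add: Gp_vertices_def)
  show "quantum_coclique Gp_vertices Gp_adj 6 4
      (\<lambda>v i. if i < 6 \<and> v \<in> Gp_basis i then rank_one_proj 4 v else 0\<^sub>m 4 4)"
  proof (rule quantum_coclique_of_orthogonal_bases)
    show "finite Gp_vertices"
      by (simp add: Gp_vertices_def)
    show "Gp_basis i \<subseteq> Gp_vertices" if "i < 6" for i
      using that unfolding Gp_vertices_eq_Union_bases by blast
  qed (simp_all add: Gp_bases_disjoint Gp_basis_nonzero Gp_basis_resolution Gp_adj_iff_dot)
qed simp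

theorem mainTheorem1:
  shows "alpha Gp_vertices Gp_adj < alpha_q Gp_vertices Gp_adj \<and>
         alpha Gp_vertices Gp_adj \<le> 5 \<and> 6 \<le> alpha_q Gp_vertices Gp_adj"
  using alpha_Gp_le_5 alpha_q_Gp_ge_6 by simp

end
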